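(* Let $\bar z$ be a feasible point of the MPCC $$\min f(z)\ \text{ s.t. }\ g(z)\le 0,\ h(z)=0,\ 0\le G(z)\perp H(z)\ge 0,$$ where $f:\mathbb{R}^n\to\mathbb{R}$, $g:\mathbb{R}^n\to\mathbb{R}^{n_g}$, $h:\mathbb{R}^n\to\mathbb{R}^{n_h}$, $G,H:\mathbb{R}^n\to\mathbb{R}^m$ are differentiable. Suppose $\bar z$ is B-stationary and MPCC-ACQ holds at $\bar z$. Then $\bar z$ is piecewise M-stationary.
   Context: The complementarity constraint $0\le G(z)\perp H(z)\ge 0$ means $G(z)\ge0$, $H(z)\ge 0$, $G_i(z)H_i(z)=0$ for all $i$. At a feasible $\bar z$ define $I_g(\bar z)=\{i: g_i(\bar z)=0\}$, $I_h(\bar z)=\{1,\dots,n_h\}$, $\alpha(\bar z)=\{i: G_i(\bar z)=0<H_i(\bar z)\}$, $\gamma(\bar z)=\{i: G_i(\bar z)>0=H_i(\bar z)\}$, $\beta(\bar z)=\{i: G_i(\bar z)=0=H_i(\bar z)\}$. Let $\mathcal T(\bar z)$ be the (Bouligand) tangent cone of the MPCC feasible set at $\bar z$. $\bar z$ is B-stationary if $\nabla f(\bar z)^Td\ge 0$ for all $d\in\mathcal T(\bar z)$. The MPCC-linearized tangent cone is $\mathcal T^{\rm lin}_{\rm MPCC}(\bar z)=\{d:\ \nabla g_i(\bar z)^Td\le 0\ (i\in I_g(\bar z));\ \nabla h_i(\bar z)^Td=0\ (i\in I_h(\bar z));\ \nabla G_i(\bar z)^Td=0\ (i\in\alpha(\bar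 z));\ \nabla H_i(\bar z)^Td=0\ (i\in \gamma(\bar z));\ \nabla G_i(\bar z)^Td\ge0,\ \nabla H_i(\bar z)^Td\ge 0,\ (\nabla G_i(\bar z)^Td)(\nabla H_i(\bar z)^Td)=0\ (i\in\beta(\bar z))\}$. MPCC-ACQ holds at $\bar z$ if $\mathcal T(\bar z)=\mathcal T^{\rm lin}_{\rm MPCC}(\bar z)$. Piecewise M-stationarity: let $\mathcal P(\beta(\bar z))$ be the set of all pairs $(\beta_1,\beta_2)$ with $\beta_1\cup\beta_2=\beta(\bar z)$, $\beta_1\cap\beta_2=\emptyset$. $\bar z$ is piecewise M-stationary if for every $(\beta_1,\beta_2)\in\mathcal P(\beta(\bar z))$ there exist multipliers $\bar\lambda=(\bar\lambda^g,\bar\lambda^h,\bar\lambda^G,\bar\lambda^H)$ (possibly depending on the partition) with $$0=\nabla f(\bar z)+\sum_{i=1}^{n_g}\bar\lambda^g_i\nabla g_i(\bar z)+\sum_{i=1}^{n_h}\bar\lambda^h_i\nabla h_i(\bar z)-\sum_{i\in\alpha(\bar z)\cup\beta(\bar z)}\bar\lambda^G_i\nabla G_i(\bar z)-\sum_{i\in\gamma(\bar z)\cup\beta(\bar z)}\bar\lambda^H_i\nabla H_i(\bar z),$$ $\bar\lambda^g_i\ge0$ and $\bar\lambda^g_ig_i(\bar z)=0$ for all $i$; $\bar\lambda^H_i\ge 0$ for $i\in\beta_1$; $\bar\lambda^G_i\ge0$ for $i\in\beta_2$; and for every $i\in\beta(\bar z)$ either $\bar\lambda^G_i,\bar\lambda^H_i\ge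 0$ or $\bar\lambda^G_i\bar\lambda^H_i=0$. *)

theory Defs
  imports "HOL-Analysis.Analysis"
begin

definition grad :: "(real^'n \<Rightarrow> real) \<Rightarrow> real^'n \<Rightarrow> real^'n" where
  "grad f z = (\<chi> j. frechet_derivative f (at z) (axis j 1))"

definition mpcc_feasible ::
  "nat \<Rightarrow> nat \<Rightarrow> nat \<Rightarrow> (nat \<Rightarrow> real^'n \<Rightarrow> real) \<Rightarrow> (nat \<Rightarrow> real^'n \<Rightarrow> real)
   \<Rightarrow> (nat \<Rightarrow> real^'n \<Rightarrow> real) \<Rightarrow> (nat \<Rightarrow> real^'n \<Rightarrow> real) \<Rightarrow> (real^'n) set" where
  "mpcc_feasible ng nh m g h G H =
     {z. (\<forall>i<ng. g i z \<le> 0) \<and> (\<forall>i<nh. h i z = 0) \<and>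
         (\<forall>i<m. G i z \<ge> 0 \<and> H i z \<ge> 0 \<and> G i z * H i z = 0)}"

definition active_g :: "nat \<Rightarrow> (nat \<Rightarrow> real^'n \<Rightarrow> real) \<Rightarrow> real^'n \<Rightarrow> nat set" where
  "active_g ng g z = {i. i < ng \<and> g i z = 0}"

definition alpha_set :: "nat \<Rightarrow> (nat \<Rightarrow> real^'n \<Rightarrow> real) \<Rightarrow> (nat \<Rightarrow> real^'n \<Rightarrow> real) \<Rightarrow> real^'n \<Rightarrow> nat set" where
  "alpha_set m G H z = {i. i < m \<and> G i z = 0 \<and> 0 < H i z}"

definition gamma_set :: "nat \<Rightarrow> (nat \<Rightarrow> real^'n \<Rightarrow> real) \<Rightarrow> (nat \<Rightarrow> real^'n \<Rightarrow> real) \<Rightarrow> real^'n \<Rightarrow> nat set" where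
  "gamma_set m G H z = {i. i < m \<and> G i z > 0 \<and> H i z = 0}"

definition beta_set :: "nat \<Rightarrow> (nat \<Rightarrow> real^'n \<Rightarrow> real) \<Rightarrow> (nat \<Rightarrow> real^'n \<Rightarrow> real) \<Rightarrow> real^'n \<Rightarrow> nat set" where
  "beta_set m G H z = {i. i < m \<and> G i z = 0 \<and> H i z = 0}"

definition tangent_cone :: "(real^'n) set \<Rightarrow> real^'n \<Rightarrow> (real^'n) set" where
  "tangent_cone S x = {d. \<exists>zs t. (\<forall>k. zs k \<in> S) \<and> zs \<longlonglongrightarrow> x \<and> (\<forall>k. t k > 0) \<and>
      t \<longlonglongrightarrow> 0 \<and> (\<lambda>k. (1 / t k) *\<^sub>R (zs k - x)) \<longlonglongrightarrow> d}"

definition mpcc_lin_cone ::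
  "nat \<Rightarrow> nat \<Rightarrow> nat \<Rightarrow> (nat \<Rightarrow> real^'n \<Rightarrow> real) \<Rightarrow> (nat \<Rightarrow> real^'n \<Rightarrow> real)
   \<Rightarrow> (nat \<Rightarrow> real^'n \<Rightarrow> real) \<Rightarrow> (nat \<Rightarrow> real^'n \<Rightarrow> real) \<Rightarrow> real^'n \<Rightarrow> (real^'n) set" where
  "mpcc_lin_cone ng nh m g h G H z =
     {d. (\<forall>i\<in>active_g ng g z. grad (g i) z \<bullet> d \<le> 0) \<and>
         (\<forall>i<nh. grad (h i) z \<bullet> d = 0) \<and>
         (\<forall>i\<in>alpha_set m G H z. grad (G i) z \<bullet> d = 0) \<and>
         (\<forall>i\<in>gamma_set m G H z. grad (H i) z \<bullet> d = 0) \<and>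
         (\<forall>i\<in>beta_set m G H z. grad (G i) z \<bullet> d \<ge> 0 \<and> grad (H i) z \<bullet> d \<ge> 0 \<and>
             (grad (G i) z \<bullet> d) * (grad (H i) z \<bullet> d) = 0)}"

definition B_stationary ::
  "(real^'n \<Rightarrow> real) \<Rightarrow> nat \<Rightarrow> nat \<Rightarrow> nat \<Rightarrow> (nat \<Rightarrow> real^'n \<Rightarrow> real) \<Rightarrow> (nat \<Rightarrow> real^'n \<Rightarrow> real)
   \<Rightarrow> (nat \<Rightarrow> real^'n \<Rightarrow> real) \<Rightarrow> (nat \<Rightarrow> real^'n \<Rightarrow> real) \<Rightarrow> real^'n \<Rightarrow> bool" where
  "B_stationary f ng nh m g h G H z \<longleftrightarrow>
     (\<forall>d\<in>tangent_cone (mpcc_feasible ng nh m g h G H) z. grad f z \<bullet> d \<ge> 0)"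

definition MPCC_ACQ ::
  "nat \<Rightarrow> nat \<Rightarrow> nat \<Rightarrow> (nat \<Rightarrow> real^'n \<Rightarrow> real) \<Rightarrow> (nat \<Rightarrow> real^'n \<Rightarrow> real)
   \<Rightarrow> (nat \<Rightarrow> real^'n \<Rightarrow> real) \<Rightarrow> (nat \<Rightarrow> real^'n \<Rightarrow> real) \<Rightarrow> real^'n \<Rightarrow> bool" where
  "MPCC_ACQ ng nh m g h G H z \<longleftrightarrow>
     tangent_cone (mpcc_feasible ng nh m g h G H) z = mpcc_lin_cone ng nh m g h G H z"

definition piecewise_M_stationary ::
  "(real^'n \<Rightarrow> real) \<Rightarrow> nat \<Rightarrow> nat \<Rightarrow> nat \<Rightarrow> (nat \<Rightarrow> real^'n \<Rightarrow> real) \<Rightarrow> (nat \<Rightarrow> real^'n \<Rightarrow> real)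
   \<Rightarrow> (nat \<Rightarrow> real^'n \<Rightarrow> real) \<Rightarrow> (nat \<Rightarrow> real^'n \<Rightarrow> real) \<Rightarrow> real^'n \<Rightarrow> bool" where
  "piecewise_M_stationary f ng nh m g h G H z \<longleftrightarrow>
     (\<forall>\<beta>1 \<beta>2. \<beta>1 \<union> \<beta>2 = beta_set m G H z \<and> \<beta>1 \<inter> \<beta>2 = {} \<longrightarrow>
       (\<exists>lg lh lG lH :: nat \<Rightarrow> real.
          grad f z + (\<Sum>i<ng. lg i *\<^sub>R grad (g i) z) + (\<Sum>i<nh. lh i *\<^sub>R grad (h i) z)
            - (\<Sum>i\<in>alpha_set m G H z \<union> beta_set m G H z. lG i *\<^sub>R grad (G i) z)
            - (\<Sum>i\<in>gamma_set m G H z \<union> beta_set m G H z. lH i *\<^sub>R grad (H i) z) = 0 \<and>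
          (\<forall>i<ng. lg i \<ge> 0 \<and> lg i * g i z = 0) \<and>
          (\<forall>i\<in>\<beta>1. lH i \<ge> 0) \<and> (\<forall>i\<in>\<beta>2. lG i \<ge> 0) \<and>
          (\<forall>i\<in>beta_set m G H z. (lG i \<ge> 0 \<and> lH i \<ge> 0) \<or> lG i * lH i = 0)))"

end

(* Fix a partition (beta1, beta2) of the biactive set beta.  For every C \<subseteq> beta consider the
   polyhedral piece of the linearized cone in which both G_i and H_i are constrained to be
   nonnegative for i in C, only G_i is fixed to 0 for the other i in beta1, and only H_i for the
   other i in beta2.  By Farkas' lemma each piece either carries multipliers with exactly the sign
   pattern of piecewise M-stationarity, or contains a descent direction d_C.  If all pieces
   contained descent directions, the multilinear interpolation
     sum over C of (prod_{j in C} s_j) (prod_{j in beta - C} (1 - s_j)) d_C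
   with s in the unit cube chosen by a Poincare-Miranda type argument (via Kuhn's simplicial lemma)
   would be a descent direction satisfying all complementarity conditions, i.e. a point of the
   linearized cone, which under MPCC-ACQ contradicts B-stationarity. *)

theory Submission
  imports Defs
begin

lemma convex_cone_hull_finite_image:
  fixes a :: "'k \<Rightarrow> 'a::real_vector"
  assumes "finite I"
  shows "convex_cone hull (a ` I) = {\<Sum>k\<in>I. u k *\<^sub>R a k | u. \<forall>k\<in>I. 0 \<le> u k}"
    (is "_ = ?K")
proof
  have "convex_cone ?K"
    unfolding convex_cone_iff
  proof (intro conjI ballI allI impI)
    show "0 \<in> ?K" by (force intro: exI[of _ "\<lambda>_. 0"])
  next
    fix x y assume "x \<in> ?K" "y \<in> ?K"
    then obtain u w where "\<forall>k\<in>I. 0 \<le> u k" "\<forall>k\<in>I. 0 \<le> w k"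
      "x = (\<Sum>k\<in>I. u k *\<^sub>R a k)" "y = (\<Sum>k\<in>I. w k *\<^sub>R a k)" by blast
    then show "x + y \<in> ?K"
      by (auto intro!: exI[of _ "\<lambda>k. u k + w k"] simp: scaleR_add_left sum.distrib)
  next
    fix x and c :: real assume "x \<in> ?K" "0 \<le> c"
    then obtain u where "\<forall>k\<in>I. 0 \<le> u k" "x = (\<Sum>k\<in>I. u k *\<^sub>R a k)" by blast
    with \<open>0 \<le> c\<close> show "c *\<^sub>R x \<in> ?K"
      by (auto intro!: exI[of _ "\<lambda>k. c * u k"] simp: scaleR_sum_right)
  qed
  moreover have "a ` I \<subseteq> ?K"
  proof (rule image_subsetI)
    fix j assume "j \<in> I"
    have "(\<Sum>k\<in>I. (if k = j then 1 else 0) *\<^sub>R a k) = (\<Sum>k\<in>I. if k = j then a k else 0)"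
      by (rule sum.cong) auto
    with \<open>j \<in> I\<close> assms have "a j = (\<Sum>k\<in>I. (if k = j then 1 else 0) *\<^sub>R a k)"
      by simp
    then show "a j \<in> ?K" by force
  qed
  ultimately show "convex_cone hull (a ` I) \<subseteq> ?K" by (rule hull_minimal[rotated])
next
  have "(\<Sum>k\<in>J. u k *\<^sub>R a k) \<in> convex_cone hull (a ` I)"
    if "J \<subseteq> I" "\<forall>k\<in>I. 0 \<le> u k" for J u
    using finite_subset[OF that(1) assms] that(1)
  proof (induction J rule: finite_subset_induct')
    case (insert j J)
    have "u j *\<^sub>R a j \<in> convex_cone hull (a ` I)"
      using insert that(2) by (intro convex_cone_hull_mul hull_inc) auto
    with insert show ?case by (simp add: convex_cone_hull_add)
  qed (simp add: convex_cone_hull_contains_0)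
  then show "?K \<subseteq> convex_cone hull (a ` I)" by blast
qed

lemma conic_separation_nonneg:
  fixes w :: "'a::real_inner"
  assumes "conic K" "\<forall>x\<in>K. t < w \<bullet> x" "x \<in> K"
  shows "0 \<le> w \<bullet> x"
proof (rule ccontr)
  assume "\<not> 0 \<le> w \<bullet> x"
  moreover have "t < 0"
    using assms by (metis conic_contains_0 empty_iff inner_zero_right)
  ultimately have "(t / (w \<bullet> x)) *\<^sub>R x \<in> K"
    using assms by (intro conicD) (auto simp: divide_nonpos_neg)
  with assms(2) \<open>\<not> 0 \<le> w \<bullet> x\<close> show False by auto
qed

lemma farkas_lemma:
  fixes a :: "'k \<Rightarrow> 'a::euclidean_space"
  assumes "finite I"
  shows "(\<exists>u. (\<forall>k\<in>I. 0 \<le> u k) \<and> b = (\<Sum>k\<in>I. u k *\<^sub>R a k)) \<or>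
         (\<exists>d. b \<bullet> d < 0 \<and> (\<forall>k\<in>I. 0 \<le> a k \<bullet> d))"
proof (cases "b \<in> convex_cone hull (a ` I)")
  case True
  then show ?thesis using convex_cone_hull_finite_image[OF assms] by blast
next
  case False
  obtain w t where wt: "w \<bullet> b < t" "\<forall>x\<in>convex_cone hull (a ` I). t < w \<bullet> x"
    using separating_hyperplane_closed_point[OF convex_convex_cone_hull _ False]
      closed_convex_cone_hull assms by blast
  have "0 \<le> a k \<bullet> w" if "k \<in> I" for k
    using conic_separation_nonneg[OF conic_convex_cone_hull wt(2) hull_inc[OF imageI[OF that]]]
    by (simp add: inner_commute)
  moreover have "t < 0"
    using wt(2) convex_cone_hull_contains_0 by fastforce
  ultimately have "b \<bullet> w < 0 \<and> (\<forall>k\<in>I. 0 \<le> a k \<bullet> w)"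
    using wt(1) by (simp add: inner_commute)
  then show ?thesis by blast
qed

lemma Inl_mem_Plus_iff [simp]: "Inl x \<in> A <+> B \<longleftrightarrow> x \<in> A"
  by (auto simp: Plus_def)

lemma Inr_mem_Plus_iff [simp]: "Inr y \<in> A <+> B \<longleftrightarrow> y \<in> B"
  by (auto simp: Plus_def)

lemma ball_Plus_iff: "(\<forall>k\<in>A <+> B. P k) \<longleftrightarrow> (\<forall>x\<in>A. P (Inl x)) \<and> (\<forall>y\<in>B. P (Inr y))"
  by auto

lemma farkas_lemma_mixed:
  fixes a :: "'k \<Rightarrow> 'a::euclidean_space"
  assumes "finite I" "P \<subseteq> I"
  shows "(\<exists>u. (\<forall>k\<in>P. 0 \<le> u k) \<and> b = (\<Sum>k\<in>I. u k *\<^sub>R a k)) \<or>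
         (\<exists>d. b \<bullet> d < 0 \<and> (\<forall>k\<in>P. 0 \<le> a k \<bullet> d) \<and> (\<forall>k\<in>I - P. a k \<bullet> d = 0))"
proof -
  define a' where "a' = case_sum a (\<lambda>k. - a k)"
  have fin: "finite (I - P)" using assms by simp
  consider (comb) u where "\<forall>k\<in>I <+> (I - P). 0 \<le> u k"
      "b = (\<Sum>k\<in>I <+> (I - P). u k *\<^sub>R a' k)"
    | (sep) d where "b \<bullet> d < 0" "\<forall>k\<in>I <+> (I - P). 0 \<le> a' k \<bullet> d"
    using farkas_lemma[where I = "I <+> (I - P)" and a = a' and b = b] assms
    by (meson finite_Plus finite_Diff)
  then show ?thesis
  proof cases
    case comb
    define u' where "u' k = u (Inl k) - (if k \<in> I - P then u (Inr k) else 0)" for k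
    have free_part: "(\<Sum>k\<in>I - P. u (Inr k) *\<^sub>R a k) =
        (\<Sum>k\<in>I. (if k \<in> I - P then u (Inr k) else 0) *\<^sub>R a k)"
      using assms by (intro sum.mono_neutral_cong_left) auto
    have "b = (\<Sum>k\<in>I. u' k *\<^sub>R a k)"
      using comb(2) assms fin
      by (simp add: sum.Plus a'_def sum_negf free_part u'_def scaleR_diff_left sum_subtractf)
    moreover have "\<forall>k\<in>P. 0 \<le> u' k"
      using comb(1) assms(2) by (auto simp: u'_def)
    ultimately show ?thesis by blast
  next
    case sep
    have "0 \<le> a k \<bullet> d" if "k \<in> I" for k
      using bspec[OF sep(2) InlI[OF that]] by (simp add: a'_def)
    moreover have "a k \<bullet> d \<le> 0" if "k \<in> I - P" for k
      using bspec[OF sep(2) InrI[OF that]] by (simp add: a'_def)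
    ultimately show ?thesis
      using sep(1) assms(2) by (force intro!: antisym)
  qed
qed

lemma finite_coordinates_convergent_subseq:
  fixes x :: "nat \<Rightarrow> 'b \<Rightarrow> 'a::metric_space"
  assumes "finite B" "compact S" "\<And>k j. j \<in> B \<Longrightarrow> x k j \<in> S"
  obtains r l where "strict_mono r" "\<And>j. j \<in> B \<Longrightarrow> l j \<in> S"
    "\<And>j. j \<in> B \<Longrightarrow> (\<lambda>k. x (r k) j) \<longlonglongrightarrow> l j"
  using assms(1,3)
proof (induction B arbitrary: thesis rule: finite_induct)
  case empty
  show ?case using empty(1)[OF strict_mono_id] by simp
next
  case (insert i B)
  obtain r l where r: "strict_mono r" "\<And>j. j \<in> B \<Longrightarrow> l j \<in> S"
    "\<And>j. j \<in> B \<Longrightarrow> (\<lambda>k. x (r k) j) \<longlonglongrightarrow> l j"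
    using insert.IH insert.prems(2) by blast
  obtain li r' where r': "li \<in> S" "strict_mono r'" "((\<lambda>k. x (r k) i) \<circ> r') \<longlonglongrightarrow> li"
    using assms(2) insert.prems(2) unfolding compact_eq_seq_compact_metric
    by (elim seq_compactE[of S "\<lambda>k. x (r k) i"]) auto
  show ?case
  proof (rule insert.prems(1))
    show "strict_mono (r \<circ> r')" using r(1) r'(2) by (rule strict_mono_o)
    show "(l(i := li)) j \<in> S" if "j \<in> insert i B" for j
      using that r(2) r'(1) by auto
    show "(\<lambda>k. x ((r \<circ> r') k) j) \<longlonglongrightarrow> (l(i := li)) j" if "j \<in> insert i B" for j
      using that r'(3) LIMSEQ_subseq_LIMSEQ[OF r(3) r'(2)] insert.hyps(2)
      by (auto simp: o_def)
  qed
qed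

lemma kuhn_lemma_bool:
  fixes L :: "(nat \<Rightarrow> nat) \<Rightarrow> nat \<Rightarrow> bool"
  assumes "0 < p"
    and "\<And>x i. \<forall>j<n. x j \<le> p \<Longrightarrow> i < n \<Longrightarrow> x i = 0 \<Longrightarrow> \<not> L x i"
    and "\<And>x i. \<forall>j<n. x j \<le> p \<Longrightarrow> i < n \<Longrightarrow> x i = p \<Longrightarrow> L x i"
  obtains q where "\<forall>i<n. q i < p"
    and "\<forall>i<n. \<exists>r s. (\<forall>j<n. q j \<le> r j \<and> r j \<le> q j + 1) \<and> (\<forall>j<n. q j \<le> s j \<and> s j \<le> q j + 1)
                    \<and> L r i \<and> \<not> L s i"
proof -
  obtain q where q: "\<forall>i<n. q i < p"
    "\<forall>i<n. \<exists>r s. (\<forall>j<n. q j \<le> r j \<and> r j \<le> q j + 1) \<and> (\<forall>j<n. q j \<le> s j \<and> s j \<le> q j + 1)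
                  \<and> of_bool (L r i) \<noteq> (of_bool (L s i) :: nat)"
    by (rule kuhn_lemma[of p n "\<lambda>x i. of_bool (L x i)"]) (use assms in auto)
  have labelled: "\<exists>r s. (\<forall>j<n. q j \<le> r j \<and> r j \<le> q j + 1) \<and> (\<forall>j<n. q j \<le> s j \<and> s j \<le> q j + 1)
                    \<and> L r i \<and> \<not> L s i" if i: "i < n" for i
  proof -
    obtain r s where "\<forall>j<n. q j \<le> r j \<and> r j \<le> q j + 1" "\<forall>j<n. q j \<le> s j \<and> s j \<le> q j + 1"
      "of_bool (L r i) \<noteq> (of_bool (L s i) :: nat)"
      using q(2)[rule_format, OF i] by blast
    moreover from this(3) have "L r i \<noteq> L s i" by auto
    ultimately show ?thesis by (cases "L r i") blast+
  qed
  show thesis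
    by (rule that[OF q(1)]) (intro allI impI labelled)
qed

lemma grid_neighbour_tendsto:
  fixes p q z :: "nat \<Rightarrow> nat"
  assumes "filterlim p at_top sequentially" "(\<lambda>k. real (q k) / real (p k)) \<longlonglongrightarrow> l"
    and "\<And>k. q k \<le> z k" "\<And>k. z k \<le> q k + 1"
  shows "(\<lambda>k. real (z k) / real (p k)) \<longlonglongrightarrow> l"
proof (rule tendsto_sandwich[OF _ _ assms(2)])
  have "(\<lambda>k. inverse (real (p k))) \<longlonglongrightarrow> 0"
    using filterlim_compose[OF filterlim_real_sequentially assms(1)]
    by (rule tendsto_inverse_0_at_top)
  then show "(\<lambda>k. real (q k) / real (p k) + inverse (real (p k))) \<longlonglongrightarrow> l"
    using tendsto_add[OF assms(2)] by fastforce
  have "real (q k) \<le> real (z k)" "real (z k) \<le> real (q k) + 1" for k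
    using assms(3,4)[of k] by (metis of_nat_mono, metis of_nat_1 of_nat_add of_nat_mono)
  then show "\<forall>\<^sub>F k in sequentially. real (q k) / real (p k) \<le> real (z k) / real (p k)"
    and "\<forall>\<^sub>F k in sequentially.
           real (z k) / real (p k) \<le> real (q k) / real (p k) + inverse (real (p k))"
    by (auto intro!: always_eventually divide_right_mono
        simp: inverse_eq_divide add_divide_distrib[symmetric])
qed

lemma tendsto_sign_complementarity:
  fixes a b c :: "nat \<Rightarrow> real"
  assumes "a \<longlonglongrightarrow> x" "b \<longlonglongrightarrow> x" "c \<longlonglongrightarrow> t"
    and "\<And>k. 0 \<le> a k" "\<And>k. c k \<le> 0 \<or> b k < 0"
  shows "0 \<le> x" "x = 0 \<or> t \<le> 0"
proof -
  show "0 \<le> x"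
    using assms(1,4) by (intro LIMSEQ_le_const[OF assms(1)]) blast
  show "x = 0 \<or> t \<le> 0"
  proof (rule ccontr)
    assume "\<not> (x = 0 \<or> t \<le> 0)"
    with \<open>0 \<le> x\<close> have "\<forall>\<^sub>F k in sequentially. 0 < b k \<and> 0 < c k"
      by (intro eventually_conj order_tendstoD(1)[OF assms(2)] order_tendstoD(1)[OF assms(3)]) auto
    then obtain k where "0 < b k" "0 < c k"
      using eventually_happens'[OF sequentially_bot] by blast
    with assms(5)[of k] show False by auto
  qed
qed

lemma kuhn_cell_sequence:
  fixes lab :: "nat \<Rightarrow> (nat \<Rightarrow> nat) \<Rightarrow> nat \<Rightarrow> bool"
  assumes "\<And>p x i. 0 < p \<Longrightarrow> x i = 0 \<Longrightarrow> \<not> lab p x i"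
    and "\<And>p x i. 0 < p \<Longrightarrow> x i = p \<Longrightarrow> lab p x i"
  obtains Q X Y where "\<And>k i. i < n \<Longrightarrow> Q k i \<le> k"
    and "\<And>k i. i < n \<Longrightarrow> (\<forall>j<n. Q k j \<le> X k i j \<and> X k i j \<le> Q k j + 1) \<and> lab (Suc k) (X k i) i"
    and "\<And>k i. i < n \<Longrightarrow> (\<forall>j<n. Q k j \<le> Y k i j \<and> Y k i j \<le> Q k j + 1) \<and> \<not> lab (Suc k) (Y k i) i"
proof -
  define cell where "cell q x \<longleftrightarrow> (\<forall>j<n. q j \<le> x j \<and> x j \<le> q j + 1)" for q x :: "nat \<Rightarrow> nat"
  have "\<exists>q. (\<forall>i<n. q i \<le> k) \<and> (\<forall>i<n. \<exists>x y. cell q x \<and> cell q y \<and> lab (Suc k) x i \<and> \<not> lab (Suc k) y i)"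
    for k
  proof -
    have "\<not> lab (Suc k) x i" if "x i = 0" for x i
      using assms(1)[of "Suc k" x i, OF zero_less_Suc that] .
    moreover have "lab (Suc k) x i" if "x i = Suc k" for x i
      using assms(2)[of "Suc k" x i, OF zero_less_Suc that] .
    ultimately obtain q where "\<forall>i<n. q i < Suc k"
      "\<forall>i<n. \<exists>x y. (\<forall>j<n. q j \<le> x j \<and> x j \<le> q j + 1) \<and> (\<forall>j<n. q j \<le> y j \<and> y j \<le> q j + 1)
                    \<and> lab (Suc k) x i \<and> \<not> lab (Suc k) y i"
      by (rule kuhn_lemma_bool[OF zero_less_Suc])
    then show ?thesis
      unfolding cell_def less_Suc_eq_le by blast
  qed
  then obtain Q where Q: "\<And>k. \<forall>i<n. Q k i \<le> k"
    and "\<And>k. \<forall>i<n. \<exists>x y. cell (Q k) x \<and> cell (Q k) y \<and> lab (Suc k) x i \<and> \<not> lab (Suc k) y i"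
    by metis
  then obtain X Y where X: "\<And>k i. i < n \<Longrightarrow> cell (Q k) (X k i) \<and> lab (Suc k) (X k i) i"
    and Y: "\<And>k i. i < n \<Longrightarrow> cell (Q k) (Y k i) \<and> \<not> lab (Suc k) (Y k i) i"
    by metis
  have "Q k i \<le> k" if "i < n" for k i
    using Q that by blast
  from that[OF this X[unfolded cell_def] Y[unfolded cell_def]] show thesis .
qed

lemma kuhn_grid_limit:
  fixes L :: "(nat \<Rightarrow> real) \<Rightarrow> nat \<Rightarrow> bool" and B :: "nat set"
  assumes "finite B"
    and zero_face: "\<And>x i. i \<in> B \<Longrightarrow> x i = 0 \<Longrightarrow> \<not> L x i"
    and one_face: "\<And>x i. i \<in> B \<Longrightarrow> x i = 1 \<Longrightarrow> L x i"
  obtains l X Y where "\<And>j. j \<in> B \<Longrightarrow> l j \<in> {0..1}"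
    and "\<And>i k j. i \<in> B \<Longrightarrow> j \<in> B \<Longrightarrow> X i k j \<in> {0..1} \<and> Y i k j \<in> {0..1}"
    and "\<And>i j. i \<in> B \<Longrightarrow> j \<in> B \<Longrightarrow> (\<lambda>k. X i k j) \<longlonglongrightarrow> l j \<and> (\<lambda>k. Y i k j) \<longlonglongrightarrow> l j"
    and "\<And>i k. i \<in> B \<Longrightarrow> L (X i k) i \<and> \<not> L (Y i k) i"
proof -
  obtain n where B: "B \<subseteq> {..<n}"
    using finite_nat_bounded[OF assms(1)] by blast
  define pt :: "nat \<Rightarrow> (nat \<Rightarrow> nat) \<Rightarrow> nat \<Rightarrow> real"
    where "pt p x j = real (x j) / real p" for p x j
  define lab where "lab p x i \<longleftrightarrow> (if i \<in> B then L (pt p x) i else x i = p)" for p x i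
  have "\<not> lab p x i" if "0 < p" "x i = 0" for p x i
    using zero_face that by (simp add: lab_def pt_def)
  moreover have "lab p x i" if "0 < p" "x i = p" for p x i
    using one_face that by (simp add: lab_def pt_def)
  ultimately obtain Q X Y where Q: "\<And>k i. i < n \<Longrightarrow> Q k i \<le> k"
    and X: "\<And>k i. i < n \<Longrightarrow> (\<forall>j<n. Q k j \<le> X k i j \<and> X k i j \<le> Q k j + 1) \<and> lab (Suc k) (X k i) i"
    and Y: "\<And>k i. i < n \<Longrightarrow> (\<forall>j<n. Q k j \<le> Y k i j \<and> Y k i j \<le> Q k j + 1) \<and> \<not> lab (Suc k) (Y k i) i"
    by (rule kuhn_cell_sequence[of lab n]) blast+
  have cell_cube: "pt (Suc k) x j \<in> {0..1}" if "x j \<le> Q k j + 1" "j \<in> B" for k x j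
  proof -
    have "x j \<le> Suc k"
      using that Q[of j k] B by fastforce
    then show ?thesis by (simp add: pt_def)
  qed
  have "pt (Suc k) (Q k) j \<in> {0..1}" if "j \<in> B" for k j
    using cell_cube[OF _ that] by simp
  then obtain r l where r: "strict_mono r" and l_cube: "\<And>j. j \<in> B \<Longrightarrow> l j \<in> {0..1}"
    and l_lim: "\<And>j. j \<in> B \<Longrightarrow> (\<lambda>k. pt (Suc (r k)) (Q (r k)) j) \<longlonglongrightarrow> l j"
    using finite_coordinates_convergent_subseq[OF assms(1) compact_Icc,
        where x = "\<lambda>k. pt (Suc k) (Q k)"] by blast
  have cell_lim: "(\<lambda>k. pt (Suc (r k)) (Z k) j) \<longlonglongrightarrow> l j"
    if "\<And>k. Q (r k) j \<le> Z k j \<and> Z k j \<le> Q (r k) j + 1" "j \<in> B" for Z j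
    unfolding pt_def
  proof (rule grid_neighbour_tendsto)
    show "filterlim (\<lambda>k. Suc (r k)) at_top sequentially"
      using filterlim_compose[OF filterlim_Suc filterlim_subseq[OF r]] by simp
    show "(\<lambda>k. real (Q (r k) j) / real (Suc (r k))) \<longlonglongrightarrow> l j"
      using l_lim[OF that(2)] by (simp add: pt_def)
    show "Q (r k) j \<le> Z k j" "Z k j \<le> Q (r k) j + 1" for k
      using that(1)[of k] by simp_all
  qed
  show thesis
  proof (rule that[of l "\<lambda>i k. pt (Suc (r k)) (X (r k) i)" "\<lambda>i k. pt (Suc (r k)) (Y (r k) i)"])
    fix i assume "i \<in> B"
    then have "i < n" using B by auto
    note X = X[OF this] and Y = Y[OF this]
    show "pt (Suc (r k)) (X (r k) i) j \<in> {0..1} \<and> pt (Suc (r k)) (Y (r k) i) j \<in> {0..1}"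
      if "j \<in> B" for k j
      using cell_cube[OF _ that] X[of "r k"] Y[of "r k"] that B by blast
    show "(\<lambda>k. pt (Suc (r k)) (X (r k) i) j) \<longlonglongrightarrow> l j \<and> (\<lambda>k. pt (Suc (r k)) (Y (r k) i) j) \<longlonglongrightarrow> l j"
      if "j \<in> B" for j
      using X Y that B by (intro conjI cell_lim) blast+
    show "L (pt (Suc (r k)) (X (r k) i)) i \<and> \<not> L (pt (Suc (r k)) (Y (r k) i)) i" for k
      using X[of "r k"] Y[of "r k"] \<open>i \<in> B\<close> by (simp add: lab_def)
  qed (rule l_cube)
qed

lemma unit_cube_complementarity_point:
  fixes \<Phi> :: "nat \<Rightarrow> (nat \<Rightarrow> real) \<Rightarrow> real" and B :: "nat set"
  assumes "finite B"
    and cont: "\<And>i y s. i \<in> B \<Longrightarrow> (\<And>j. j \<in> B \<Longrightarrow> (\<lambda>k. y k j) \<longlonglongrightarrow> s j) \<Longrightarrow>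
                 (\<lambda>k. \<Phi> i (y k)) \<longlonglongrightarrow> \<Phi> i s"
    and face: "\<And>i s. i \<in> B \<Longrightarrow> (\<And>j. j \<in> B \<Longrightarrow> s j \<in> {0..1}) \<Longrightarrow> s i = 1 \<Longrightarrow> 0 \<le> \<Phi> i s"
  obtains s where "\<And>j. j \<in> B \<Longrightarrow> s j \<in> {0..1}"
    and "\<And>i. i \<in> B \<Longrightarrow> 0 \<le> \<Phi> i s" and "\<And>i. i \<in> B \<Longrightarrow> \<Phi> i s = 0 \<or> s i = 0"
proof -
  obtain l X Y where l_cube: "\<And>j. j \<in> B \<Longrightarrow> l j \<in> {0..1}"
    and XY_cube: "\<And>i k j. i \<in> B \<Longrightarrow> j \<in> B \<Longrightarrow> X i k j \<in> {0..1} \<and> Y i k j \<in> {0..1}"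
    and XY_lim: "\<And>i j. i \<in> B \<Longrightarrow> j \<in> B \<Longrightarrow> (\<lambda>k. X i k j) \<longlonglongrightarrow> l j \<and> (\<lambda>k. Y i k j) \<longlonglongrightarrow> l j"
    and XY_label: "\<And>i k. i \<in> B \<Longrightarrow> (X i k i = 1 \<or> (X i k i \<noteq> 0 \<and> 0 \<le> \<Phi> i (X i k))) \<and>
        \<not> (Y i k i = 1 \<or> (Y i k i \<noteq> 0 \<and> 0 \<le> \<Phi> i (Y i k)))"
    by (rule kuhn_grid_limit[OF assms(1), where L = "\<lambda>x i. x i = 1 \<or> (x i \<noteq> 0 \<and> 0 \<le> \<Phi> i x)"]) auto
  have limit: "0 \<le> \<Phi> i l \<and> (\<Phi> i l = 0 \<or> l i \<le> 0)" if i: "i \<in> B" for i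
  proof -
    have lim_X: "(\<lambda>k. \<Phi> i (X i k)) \<longlonglongrightarrow> \<Phi> i l" and lim_Y: "(\<lambda>k. \<Phi> i (Y i k)) \<longlonglongrightarrow> \<Phi> i l"
      using XY_lim[OF i] by (auto intro: cont[OF i])
    have "0 \<le> \<Phi> i (X i k)" for k
      using XY_label[OF i, of k] face[OF i, of "X i k"] XY_cube[OF i] by auto
    moreover have "Y i k i \<le> 0 \<or> \<Phi> i (Y i k) < 0" for k
      using XY_label[OF i, of k] by auto
    ultimately show ?thesis
      using tendsto_sign_complementarity[OF lim_X lim_Y conjunct2[OF XY_lim[OF i i]]] by blast
  qed
  show thesis
  proof (rule that)
    show "l j \<in> {0..1}" if "j \<in> B" for j
      using l_cube that .
    show "0 \<le> \<Phi> i l" "\<Phi> i l = 0 \<or> l i = 0" if "i \<in> B" for i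
      using limit[OF that] l_cube[OF that] by auto
  qed
qed

definition cube_weight :: "nat set \<Rightarrow> (nat \<Rightarrow> real) \<Rightarrow> nat set \<Rightarrow> real" where
  "cube_weight B s C = (\<Prod>j\<in>C. s j) * (\<Prod>j\<in>B - C. 1 - s j)"

lemma cube_weight_nonneg:
  "(\<And>j. j \<in> B \<Longrightarrow> s j \<in> {0..1}) \<Longrightarrow> C \<subseteq> B \<Longrightarrow> 0 \<le> cube_weight B s C"
  by (auto simp: cube_weight_def intro!: mult_nonneg_nonneg prod_nonneg)

lemma sum_cube_weight: "finite B \<Longrightarrow> (\<Sum>C\<in>Pow B. cube_weight B s C) = 1"
  using prod_add[of B s "\<lambda>j. 1 - s j"] by (simp add: cube_weight_def)

lemma cube_weight_eq_0_inside: "finite C \<Longrightarrow> i \<in> C \<Longrightarrow> s i = 0 \<Longrightarrow> cube_weight B s C = 0"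
  by (auto simp: cube_weight_def prod_zero_iff)

lemma cube_weight_eq_0_outside: "finite B \<Longrightarrow> i \<in> B - C \<Longrightarrow> s i = 1 \<Longrightarrow> cube_weight B s C = 0"
  by (auto simp: cube_weight_def prod_zero_iff)

lemma tendsto_cube_weight:
  "(\<And>j. j \<in> B \<Longrightarrow> (\<lambda>k. y k j) \<longlonglongrightarrow> s j) \<Longrightarrow> C \<subseteq> B \<Longrightarrow>
     (\<lambda>k. cube_weight B (y k) C) \<longlonglongrightarrow> cube_weight B s C"
  unfolding cube_weight_def by (intro tendsto_intros) auto

lemma convex_complementary_point_of_pieces:
  fixes p :: "nat set \<Rightarrow> 'a::real_inner" and \<psi> \<phi> :: "nat \<Rightarrow> 'a"
  assumes "finite B" "convex K"
    and in_K: "\<And>C. C \<subseteq> B \<Longrightarrow> p C \<in> K"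
    and inside: "\<And>C i. C \<subseteq> B \<Longrightarrow> i \<in> C \<Longrightarrow> 0 \<le> \<psi> i \<bullet> p C \<and> 0 \<le> \<phi> i \<bullet> p C"
    and outside: "\<And>C i. C \<subseteq> B \<Longrightarrow> i \<in> B - C \<Longrightarrow> \<psi> i \<bullet> p C = 0"
  obtains x where "x \<in> K"
    and "\<And>i. i \<in> B \<Longrightarrow> 0 \<le> \<psi> i \<bullet> x \<and> 0 \<le> \<phi> i \<bullet> x \<and> (\<psi> i \<bullet> x) * (\<phi> i \<bullet> x) = 0"
proof -
  define x where "x s = (\<Sum>C\<in>Pow B. cube_weight B s C *\<^sub>R p C)" for s
  have inner_x: "a \<bullet> x s = (\<Sum>C\<in>Pow B. cube_weight B s C * (a \<bullet> p C))" for a s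
    by (simp add: x_def inner_sum_right)
  obtain s where s_cube: "\<And>j. j \<in> B \<Longrightarrow> s j \<in> {0..1}"
    and \<phi>_nonneg: "\<And>i. i \<in> B \<Longrightarrow> 0 \<le> \<phi> i \<bullet> x s"
    and \<phi>_compl: "\<And>i. i \<in> B \<Longrightarrow> \<phi> i \<bullet> x s = 0 \<or> s i = 0"
  proof (rule unit_cube_complementarity_point[OF assms(1), of "\<lambda>i s. \<phi> i \<bullet> x s"])
    fix i and y :: "nat \<Rightarrow> nat \<Rightarrow> real" and s
    assume "\<And>j. j \<in> B \<Longrightarrow> (\<lambda>k. y k j) \<longlonglongrightarrow> s j"
    then show "(\<lambda>k. \<phi> i \<bullet> x (y k)) \<longlonglongrightarrow> \<phi> i \<bullet> x s"
      unfolding inner_x by (intro tendsto_intros tendsto_cube_weight) auto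
  next
    fix i and s :: "nat \<Rightarrow> real"
    assume i: "i \<in> B" and cube: "\<And>j. j \<in> B \<Longrightarrow> s j \<in> {0..1}" and "s i = 1"
    then have "0 \<le> cube_weight B s C * (\<phi> i \<bullet> p C)" if "C \<subseteq> B" for C
      using that inside[OF that] cube_weight_nonneg[OF cube that] cube_weight_eq_0_outside[OF assms(1)]
      by (cases "i \<in> C") auto
    then show "0 \<le> \<phi> i \<bullet> x s"
      unfolding inner_x by (intro sum_nonneg) auto
  qed (rule that)
  show thesis
  proof (rule that)
    show "x s \<in> K"
      unfolding x_def using assms(1,2) sum_cube_weight cube_weight_nonneg[OF s_cube] in_K
      by (intro convex_sum) auto
  next
    fix i assume i: "i \<in> B"
    have "0 \<le> cube_weight B s C * (\<psi> i \<bullet> p C)" if "C \<subseteq> B" for C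
      using that inside[OF that] outside[OF that] cube_weight_nonneg[OF s_cube that] i
      by (cases "i \<in> C") auto
    then have "0 \<le> \<psi> i \<bullet> x s"
      unfolding inner_x by (intro sum_nonneg) auto
    moreover have "\<psi> i \<bullet> x s = 0" if "s i = 0"
      unfolding inner_x
    proof (intro sum.neutral ballI)
      fix C assume "C \<in> Pow B"
      then show "cube_weight B s C * (\<psi> i \<bullet> p C) = 0"
        using cube_weight_eq_0_inside[of C i s B] outside[of C i] finite_subset[OF _ assms(1)] i that
        by (cases "i \<in> C") auto
    qed
    ultimately show "0 \<le> \<psi> i \<bullet> x s \<and> 0 \<le> \<phi> i \<bullet> x s \<and> (\<psi> i \<bullet> x s) * (\<phi> i \<bullet> x s) = 0"
      using \<phi>_nonneg[OF i] \<phi>_compl[OF i] by auto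
  qed
qed

lemma complementarity_piece_alternative:
  fixes a :: "'k \<Rightarrow> 'a::euclidean_space" and u v :: "nat \<Rightarrow> 'a"
  assumes "finite I" "P \<subseteq> I" "finite B" "B1 \<union> B2 = B" "B1 \<inter> B2 = {}" "C \<subseteq> B"
  shows "(\<exists>\<mu> \<sigma> \<tau>. (\<forall>k\<in>P. 0 \<le> \<mu> k) \<and>
            c = (\<Sum>k\<in>I. \<mu> k *\<^sub>R a k) + (\<Sum>i\<in>B. \<sigma> i *\<^sub>R u i) + (\<Sum>i\<in>B. \<tau> i *\<^sub>R v i) \<and>
            (\<forall>i\<in>B1. 0 \<le> \<tau> i) \<and> (\<forall>i\<in>B2. 0 \<le> \<sigma> i) \<and>
            (\<forall>i\<in>B. 0 \<le> \<sigma> i \<and> 0 \<le> \<tau> i \<or> \<sigma> i * \<tau> i = 0)) \<or>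
         (\<exists>d. c \<bullet> d < 0 \<and> (\<forall>k\<in>P. 0 \<le> a k \<bullet> d) \<and> (\<forall>k\<in>I - P. a k \<bullet> d = 0) \<and>
            (\<forall>i\<in>C. 0 \<le> u i \<bullet> d \<and> 0 \<le> v i \<bullet> d) \<and>
            (\<forall>i\<in>B1 - C. u i \<bullet> d = 0) \<and> (\<forall>i\<in>B2 - C. v i \<bullet> d = 0))"
proof -
  define J where "J = I <+> (B1 \<union> C) <+> (B2 \<union> C)"
  define Q where "Q = P <+> C <+> C"
  define e where "e = case_sum a (case_sum u v)"
  have fin: "finite (B1 \<union> C)" "finite (B2 \<union> C)"
    using assms finite_subset[of _ B] by auto
  have "finite J" "Q \<subseteq> J"
    using assms fin by (auto simp: J_def Q_def)
  from farkas_lemma_mixed[OF this, of c e]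
  consider (comb) \<mu> where "\<forall>k\<in>Q. 0 \<le> \<mu> k" "c = (\<Sum>k\<in>J. \<mu> k *\<^sub>R e k)"
    | (sep) d where "c \<bullet> d < 0" "\<forall>k\<in>Q. 0 \<le> e k \<bullet> d" "\<forall>k\<in>J - Q. e k \<bullet> d = 0"
    by blast
  then show ?thesis
  proof cases
    case comb
    define \<sigma> where "\<sigma> i = (if i \<in> B1 \<union> C then \<mu> (Inr (Inl i)) else 0)" for i
    define \<tau> where "\<tau> i = (if i \<in> B2 \<union> C then \<mu> (Inr (Inr i)) else 0)" for i
    have "(\<Sum>i\<in>B1 \<union> C. \<mu> (Inr (Inl i)) *\<^sub>R u i) = (\<Sum>i\<in>B. \<sigma> i *\<^sub>R u i)"
      using assms by (intro sum.mono_neutral_cong_left) (auto simp: \<sigma>_def)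
    moreover have "(\<Sum>i\<in>B2 \<union> C. \<mu> (Inr (Inr i)) *\<^sub>R v i) = (\<Sum>i\<in>B. \<tau> i *\<^sub>R v i)"
      using assms by (intro sum.mono_neutral_cong_left) (auto simp: \<tau>_def)
    ultimately have "c = (\<Sum>k\<in>I. \<mu> (Inl k) *\<^sub>R a k) + (\<Sum>i\<in>B. \<sigma> i *\<^sub>R u i) + (\<Sum>i\<in>B. \<tau> i *\<^sub>R v i)"
      using comb(2) assms(1) fin by (simp add: J_def e_def sum.Plus add.assoc)
    moreover have "\<forall>k\<in>P. 0 \<le> \<mu> (Inl k)"
      using comb(1) by (simp add: Q_def)
    moreover have "\<forall>i\<in>B1. 0 \<le> \<tau> i" "\<forall>i\<in>B2. 0 \<le> \<sigma> i"
      "\<forall>i\<in>B. 0 \<le> \<sigma> i \<and> 0 \<le> \<tau> i \<or> \<sigma> i * \<tau> i = 0"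
      using comb(1) assms(4,5) by (auto simp: Q_def \<sigma>_def \<tau>_def)
    ultimately show ?thesis
      by (intro disjI1 exI[of _ "\<mu> \<circ> Inl"] exI[of _ \<sigma>] exI[of _ \<tau>]) simp
  next
    case sep
    have "\<forall>k\<in>P. 0 \<le> a k \<bullet> d" "\<forall>i\<in>C. 0 \<le> u i \<bullet> d \<and> 0 \<le> v i \<bullet> d"
      using sep(2) by (simp_all add: Q_def e_def ball_Plus_iff)
    moreover have "\<forall>k\<in>I - P. a k \<bullet> d = 0" "\<forall>i\<in>B1 - C. u i \<bullet> d = 0" "\<forall>i\<in>B2 - C. v i \<bullet> d = 0"
      using bspec[OF sep(3), of "Inl _"] bspec[OF sep(3), of "Inr (Inl _)"]
        bspec[OF sep(3), of "Inr (Inr _)"]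
      by (simp_all add: J_def Q_def e_def)
    ultimately show ?thesis
      using sep(1) by blast
  qed
qed

lemma complementarity_cone_multipliers:
  fixes a :: "'k \<Rightarrow> 'a::euclidean_space" and u v :: "nat \<Rightarrow> 'a"
  assumes "finite I" "P \<subseteq> I" "finite B" "B1 \<union> B2 = B" "B1 \<inter> B2 = {}"
    and nonneg: "\<And>d. \<forall>k\<in>P. 0 \<le> a k \<bullet> d \<Longrightarrow> \<forall>k\<in>I - P. a k \<bullet> d = 0 \<Longrightarrow>
                   \<forall>i\<in>B. 0 \<le> u i \<bullet> d \<and> 0 \<le> v i \<bullet> d \<and> (u i \<bullet> d) * (v i \<bullet> d) = 0 \<Longrightarrow> 0 \<le> c \<bullet> d"
  shows "\<exists>\<mu> \<sigma> \<tau>. (\<forall>k\<in>P. 0 \<le> \<mu> k) \<and>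
            c = (\<Sum>k\<in>I. \<mu> k *\<^sub>R a k) + (\<Sum>i\<in>B. \<sigma> i *\<^sub>R u i) + (\<Sum>i\<in>B. \<tau> i *\<^sub>R v i) \<and>
            (\<forall>i\<in>B1. 0 \<le> \<tau> i) \<and> (\<forall>i\<in>B2. 0 \<le> \<sigma> i) \<and>
            (\<forall>i\<in>B. 0 \<le> \<sigma> i \<and> 0 \<le> \<tau> i \<or> \<sigma> i * \<tau> i = 0)"
proof (rule ccontr)
  assume no_multipliers: "\<not> ?thesis"
  define K where "K = {d. c \<bullet> d < 0} \<inter> (\<Inter>k\<in>P. {d. a k \<bullet> d \<ge> 0}) \<inter> (\<Inter>k\<in>I - P. {d. a k \<bullet> d = 0})"
  have "convex K"
    unfolding K_def
    by (intro convex_Int convex_INT convex_halfspace_lt convex_halfspace_ge convex_hyperplane)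
  have "\<exists>d. d \<in> K \<and> (\<forall>i\<in>C. 0 \<le> u i \<bullet> d \<and> 0 \<le> v i \<bullet> d) \<and>
             (\<forall>i\<in>B1 - C. u i \<bullet> d = 0) \<and> (\<forall>i\<in>B2 - C. v i \<bullet> d = 0)" if "C \<subseteq> B" for C
    using complementarity_piece_alternative[where a = a and u = u and v = v and c = c, OF assms(1-5) that]
      no_multipliers
    unfolding K_def by blast
  then obtain p where p: "\<And>C. C \<subseteq> B \<Longrightarrow> p C \<in> K \<and> (\<forall>i\<in>C. 0 \<le> u i \<bullet> p C \<and> 0 \<le> v i \<bullet> p C) \<and>
      (\<forall>i\<in>B1 - C. u i \<bullet> p C = 0) \<and> (\<forall>i\<in>B2 - C. v i \<bullet> p C = 0)"
    by metis
  (* \<psi> i is the gradient that the pieces fix to 0 off C, \<phi> i the one they leave free. *)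
  define \<psi> where "\<psi> i = (if i \<in> B1 then u i else v i)" for i
  define \<phi> where "\<phi> i = (if i \<in> B1 then v i else u i)" for i
  obtain x where "x \<in> K"
    and x: "\<And>i. i \<in> B \<Longrightarrow> 0 \<le> \<psi> i \<bullet> x \<and> 0 \<le> \<phi> i \<bullet> x \<and> (\<psi> i \<bullet> x) * (\<phi> i \<bullet> x) = 0"
  proof (rule convex_complementary_point_of_pieces[OF assms(3) \<open>convex K\<close>])
    show "p C \<in> K" if "C \<subseteq> B" for C
      using p[OF that] by blast
    show "0 \<le> \<psi> i \<bullet> p C \<and> 0 \<le> \<phi> i \<bullet> p C" if "C \<subseteq> B" "i \<in> C" for C i
      using p[OF that(1)] that(2) by (simp add: \<psi>_def \<phi>_def)
    show "\<psi> i \<bullet> p C = 0" if "C \<subseteq> B" "i \<in> B - C" for C i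
      using p[OF that(1)] that(2) assms(4) by (auto simp: \<psi>_def)
  qed (rule that)
  have "0 \<le> u i \<bullet> x \<and> 0 \<le> v i \<bullet> x \<and> (u i \<bullet> x) * (v i \<bullet> x) = 0" if "i \<in> B" for i
    using x[OF that] by (cases "i \<in> B1") (auto simp: \<psi>_def \<phi>_def)
  with \<open>x \<in> K\<close> nonneg show False
    unfolding K_def by force
qed

locale mpcc_constraints =
  fixes ng nh m :: nat and g h G H :: "nat \<Rightarrow> real^'n \<Rightarrow> real" and z :: "real^'n"
begin

abbreviation "I\<^sub>g \<equiv> active_g ng g z"
abbreviation "\<alpha> \<equiv> alpha_set m G H z"
abbreviation "\<beta> \<equiv> beta_set m G H z"
abbreviation "\<gamma> \<equiv> gamma_set m G H z"

(* The constraints of the linearized cone not involving \<beta>, as one family: the sign-constrained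
   part - grad g_i (i active, tagged Inl) and the equalities for h, for G on \<alpha>, for H on \<gamma>. *)
definition std_index :: "(nat + nat + nat + nat) set" where
  "std_index = I\<^sub>g <+> {..<nh} <+> \<alpha> <+> \<gamma>"

definition std_grad :: "nat + nat + nat + nat \<Rightarrow> real^'n" where
  "std_grad = case_sum (\<lambda>i. - grad (g i) z)
     (case_sum (\<lambda>i. grad (h i) z) (case_sum (\<lambda>i. grad (G i) z) (\<lambda>i. grad (H i) z)))"

lemma finite_active_g: "finite I\<^sub>g"
  by (simp add: active_g_def)

lemma finite_alpha_set: "finite \<alpha>"
  by (simp add: alpha_set_def)

lemma finite_beta_set: "finite \<beta>"
  by (simp add: beta_set_def)

lemma finite_gamma_set: "finite \<gamma>"
  by (simp add: gamma_set_def)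

lemma finite_std_index: "finite std_index"
  by (simp add: std_index_def finite_active_g finite_alpha_set finite_gamma_set)

lemma active_std_index: "Inl ` I\<^sub>g \<subseteq> std_index"
  by (auto simp: std_index_def)

lemma mpcc_lin_cone_iff:
  "d \<in> mpcc_lin_cone ng nh m g h G H z \<longleftrightarrow>
     (\<forall>k\<in>Inl ` I\<^sub>g. 0 \<le> std_grad k \<bullet> d) \<and> (\<forall>k\<in>std_index - Inl ` I\<^sub>g. std_grad k \<bullet> d = 0) \<and>
     (\<forall>i\<in>\<beta>. 0 \<le> grad (G i) z \<bullet> d \<and> 0 \<le> grad (H i) z \<bullet> d \<and> (grad (G i) z \<bullet> d) * (grad (H i) z \<bullet> d) = 0)"
proof -
  have "std_index - Inl ` I\<^sub>g = Inr ` ({..<nh} <+> \<alpha> <+> \<gamma>)"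
    by (auto simp: std_index_def)
  then show ?thesis
    by (simp add: mpcc_lin_cone_def std_grad_def ball_Plus_iff lessThan_def)
qed

lemma sum_std_index:
  "(\<Sum>k\<in>std_index. \<mu> k *\<^sub>R std_grad k) =
     - (\<Sum>i\<in>I\<^sub>g. \<mu> (Inl i) *\<^sub>R grad (g i) z) + (\<Sum>i<nh. \<mu> (Inr (Inl i)) *\<^sub>R grad (h i) z)
     + (\<Sum>i\<in>\<alpha>. \<mu> (Inr (Inr (Inl i))) *\<^sub>R grad (G i) z) + (\<Sum>i\<in>\<gamma>. \<mu> (Inr (Inr (Inr i))) *\<^sub>R grad (H i) z)"
  by (simp add: std_index_def std_grad_def sum.Plus sum_negf add.assoc
      finite_active_g finite_alpha_set finite_gamma_set)

lemma piecewise_M_stationary_of_std_multipliers: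
  assumes "\<And>\<beta>1 \<beta>2. \<beta>1 \<union> \<beta>2 = \<beta> \<Longrightarrow> \<beta>1 \<inter> \<beta>2 = {} \<Longrightarrow>
    \<exists>\<mu> \<sigma> \<tau>. (\<forall>k\<in>Inl ` I\<^sub>g. 0 \<le> \<mu> k) \<and>
      grad f z = (\<Sum>k\<in>std_index. \<mu> k *\<^sub>R std_grad k) + (\<Sum>i\<in>\<beta>. \<sigma> i *\<^sub>R grad (G i) z)
        + (\<Sum>i\<in>\<beta>. \<tau> i *\<^sub>R grad (H i) z) \<and>
      (\<forall>i\<in>\<beta>1. 0 \<le> \<tau> i) \<and> (\<forall>i\<in>\<beta>2. 0 \<le> \<sigma> i) \<and>
      (\<forall>i\<in>\<beta>. 0 \<le> \<sigma> i \<and> 0 \<le> \<tau> i \<or> \<sigma> i * \<tau> i = 0)"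
  shows "piecewise_M_stationary f ng nh m g h G H z"
  unfolding piecewise_M_stationary_def
proof (intro allI impI, elim conjE, goal_cases)
  case (1 \<beta>1 \<beta>2)
  obtain \<mu> \<sigma> \<tau> where \<mu>: "\<forall>k\<in>Inl ` I\<^sub>g. 0 \<le> \<mu> k"
    and grad_f: "grad f z = (\<Sum>k\<in>std_index. \<mu> k *\<^sub>R std_grad k)
        + (\<Sum>i\<in>\<beta>. \<sigma> i *\<^sub>R grad (G i) z) + (\<Sum>i\<in>\<beta>. \<tau> i *\<^sub>R grad (H i) z)"
    and signs: "\<forall>i\<in>\<beta>1. 0 \<le> \<tau> i" "\<forall>i\<in>\<beta>2. 0 \<le> \<sigma> i" "\<forall>i\<in>\<beta>. 0 \<le> \<sigma> i \<and> 0 \<le> \<tau> i \<or> \<sigma> i * \<tau> i = 0"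
    using assms[OF 1] by blast
  have disjoint: "\<alpha> \<inter> \<beta> = {}" "\<gamma> \<inter> \<beta> = {}"
    by (auto simp: alpha_set_def gamma_set_def beta_set_def)
  define lg where "lg i = (if i \<in> I\<^sub>g then \<mu> (Inl i) else 0)" for i
  define lh where "lh i = - \<mu> (Inr (Inl i))" for i
  define lG where "lG i = (if i \<in> \<beta> then \<sigma> i else \<mu> (Inr (Inr (Inl i))))" for i
  define lH where "lH i = (if i \<in> \<beta> then \<tau> i else \<mu> (Inr (Inr (Inr i))))" for i
  have "(\<Sum>i<ng. lg i *\<^sub>R grad (g i) z) = (\<Sum>i\<in>I\<^sub>g. \<mu> (Inl i) *\<^sub>R grad (g i) z)"
    by (rule sum.mono_neutral_cong_right) (auto simp: lg_def active_g_def)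
  moreover have "(\<Sum>i\<in>\<alpha> \<union> \<beta>. lG i *\<^sub>R grad (G i) z) =
      (\<Sum>i\<in>\<alpha>. \<mu> (Inr (Inr (Inl i))) *\<^sub>R grad (G i) z) + (\<Sum>i\<in>\<beta>. \<sigma> i *\<^sub>R grad (G i) z)"
    using disjoint by (simp add: sum.union_disjoint finite_alpha_set finite_beta_set lG_def
        disjoint_iff cong: sum.cong)
  moreover have "(\<Sum>i\<in>\<gamma> \<union> \<beta>. lH i *\<^sub>R grad (H i) z) =
      (\<Sum>i\<in>\<gamma>. \<mu> (Inr (Inr (Inr i))) *\<^sub>R grad (H i) z) + (\<Sum>i\<in>\<beta>. \<tau> i *\<^sub>R grad (H i) z)"
    using disjoint by (simp add: sum.union_disjoint finite_gamma_set finite_beta_set lH_def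
        disjoint_iff cong: sum.cong)
  ultimately have "grad f z + (\<Sum>i<ng. lg i *\<^sub>R grad (g i) z) + (\<Sum>i<nh. lh i *\<^sub>R grad (h i) z)
      - (\<Sum>i\<in>\<alpha> \<union> \<beta>. lG i *\<^sub>R grad (G i) z) - (\<Sum>i\<in>\<gamma> \<union> \<beta>. lH i *\<^sub>R grad (H i) z) = 0"
    using grad_f by (simp add: sum_std_index lh_def sum_negf algebra_simps)
  moreover have "\<forall>i<ng. lg i \<ge> 0 \<and> lg i * g i z = 0"
    using \<mu> by (auto simp: lg_def active_g_def)
  moreover have "\<forall>i\<in>\<beta>1. lH i \<ge> 0" "\<forall>i\<in>\<beta>2. lG i \<ge> 0" "\<forall>i\<in>\<beta>. (lG i \<ge> 0 \<and> lH i \<ge> 0) \<or> lG i * lH i = 0"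
    using 1 signs by (auto simp: lG_def lH_def)
  ultimately show ?case by blast
qed

end

theorem theorem2p2:
  fixes f :: "real^'n \<Rightarrow> real"
    and g h G H :: "nat \<Rightarrow> real^'n \<Rightarrow> real"
    and ng nh m :: nat
    and zbar :: "real^'n"
  assumes "\<And>z. f differentiable (at z)"
    and "\<And>i z. i < ng \<Longrightarrow> g i differentiable (at z)"
    and "\<And>i z. i < nh \<Longrightarrow> h i differentiable (at z)"
    and "\<And>i z. i < m \<Longrightarrow> G i differentiable (at z)"
    and "\<And>i z. i < m \<Longrightarrow> H i differentiable (at z)"
    and "zbar \<in> mpcc_feasible ng nh m g h G H"
    and "B_stationary f ng nh m g h G H zbar"
    and "MPCC_ACQ ng nh m g h G H zbar"
  shows "piecewise_M_stationary f ng nh m g h G H zbar"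
proof -
  interpret mpcc_constraints ng nh m g h G H zbar .
  have "0 \<le> grad f zbar \<bullet> d"
    if "\<forall>k\<in>Inl ` I\<^sub>g. 0 \<le> std_grad k \<bullet> d" and "\<forall>k\<in>std_index - Inl ` I\<^sub>g. std_grad k \<bullet> d = 0"
      and "\<forall>i\<in>\<beta>. 0 \<le> grad (G i) zbar \<bullet> d \<and> 0 \<le> grad (H i) zbar \<bullet> d \<and>
             (grad (G i) zbar \<bullet> d) * (grad (H i) zbar \<bullet> d) = 0" for d
    using assms(7,8) that mpcc_lin_cone_iff unfolding B_stationary_def MPCC_ACQ_def by blast
  from complementarity_cone_multipliers[OF finite_std_index active_std_index finite_beta_set _ _ this]
  show ?thesis
    by (rule piecewise_M_stationary_of_std_multipliers)
qed

end
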